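(* Let $|\psi\rangle\in\mathcal{H}$ be a normalized pure state and $\mathcal{N}=\{\mathcal{N}_k\}$ a non-trivial neighborhood structure. Suppose there exists a Hermitian operator of the form $\mathbb{W}=\sum_k\mathbb{W}_{\mathcal{N}_k}\otimes I_{\overline{\mathcal{N}}_k}$ (each $\mathbb{W}_{\mathcal{N}_k}$ acting on $\bigotimes_{a\in\mathcal{N}_k}\mathcal{H}_a$) such that $\langle\psi|\mathbb{W}|\psi\rangle<\langle\phi|\mathbb{W}|\phi\rangle$ for every normalized $|\phi\rangle\in\mathcal{H}_{\mathcal{N}}(|\psi\rangle)$ with $|\phi\rangle\langle\phi|\neq|\psi\rangle\langle\psi|$. Then $|\psi\rangle$ is UDA relative to $\mathcal{N}$.
   Context: $\mathcal{H}=\bigotimes_{a=1}^N\mathcal{H}_a$ is a finite-dimensional multipartite Hilbert space; $\mathcal{D}(\mathcal{H})$ is the set of density operators. A neighborhood is $\mathcal{N}_k\subsetneq\{1,\dots,N\}$, with complement $\overline{\mathcal{N}}_k$; a neighborhood structure is a finite collection of neighborhoods, non-trivial if every index lies in some neighborhood and each neighborhood intersects another. For a state $\rho$, $\rho_{\mathcal{N}_k}=\mathrm{tr}_{\overline{\mathcal{N}}_k}\rho$. The DQLS subspace of $|\psi\rangle$ is $\mathcal{H}_{\mathcal{N}}(|\psi\rangle)=\bigcap_k\mathrm{supp}(\rho_{\mathcal{N}_k}\otimes I_{\overline{\mathcal{N}}_k})$ with $\rho=|\psi\rangle\langle\psi|$. A state $\rho$ is UDA (uniquely determined among all states) relative to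 $\mathcal{N}$ if no $\sigma\in\mathcal{D}(\mathcal{H})$ with $\sigma\ne\rho$ has $\sigma_{\mathcal{N}_k}=\rho_{\mathcal{N}_k}$ for all $\mathcal{N}_k\in\mathcal{N}$. *)

theory Defs
  imports Complex_Main
begin

text \<open>Parties are 0..N-1, party a has local dimension d a. A computational basis
 state of the subsystem S is a configuration i :: nat => nat with i a < d a for a in S
 and i a = 0 outside S.\<close>

type_synonym cfg = "nat \<Rightarrow> nat"
type_synonym qop = "cfg \<Rightarrow> cfg \<Rightarrow> complex"

definition cfgs :: "(nat \<Rightarrow> nat) \<Rightarrow> nat set \<Rightarrow> cfg set" where
  "cfgs d S = {i. (\<forall>a\<in>S. i a < d a) \<and> (\<forall>a. a \<notin> S \<longrightarrow> i a = 0)}"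

definition restr :: "nat set \<Rightarrow> cfg \<Rightarrow> cfg" where
  "restr S i = (\<lambda>a. if a \<in> S then i a else 0)"

definition merge :: "nat set \<Rightarrow> cfg \<Rightarrow> cfg \<Rightarrow> cfg" where
  "merge S i j = (\<lambda>a. if a \<in> S then i a else j a)"

definition vec_on :: "(nat \<Rightarrow> nat) \<Rightarrow> nat set \<Rightarrow> (cfg \<Rightarrow> complex) \<Rightarrow> bool" where
  "vec_on d S v \<longleftrightarrow> (\<forall>x. x \<notin> cfgs d S \<longrightarrow> v x = 0)"

definition op_on :: "(nat \<Rightarrow> nat) \<Rightarrow> nat set \<Rightarrow> qop \<Rightarrow> bool" where
  "op_on d S A \<longleftrightarrow> (\<forall>x y. x \<notin> cfgs d S \<or> y \<notin> cfgs d S \<longrightarrow> A x y = 0)"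

definition hermitian_op :: "(nat \<Rightarrow> nat) \<Rightarrow> nat set \<Rightarrow> qop \<Rightarrow> bool" where
  "hermitian_op d S A \<longleftrightarrow> op_on d S A \<and> (\<forall>x y. A y x = cnj (A x y))"

definition psd_op :: "(nat \<Rightarrow> nat) \<Rightarrow> nat set \<Rightarrow> qop \<Rightarrow> bool" where
  "psd_op d S A \<longleftrightarrow> hermitian_op d S A \<and>
     (\<forall>v. 0 \<le> Re (\<Sum>x\<in>cfgs d S. \<Sum>y\<in>cfgs d S. cnj (v x) * A x y * v y))"

definition density_op :: "(nat \<Rightarrow> nat) \<Rightarrow> nat \<Rightarrow> qop \<Rightarrow> bool" where
  "density_op d N \<rho> \<longleftrightarrow> psd_op d {..<N} \<rho> \<and> (\<Sum>x\<in>cfgs d {..<N}. \<rho> x x) = 1"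

definition ptrace :: "(nat \<Rightarrow> nat) \<Rightarrow> nat \<Rightarrow> nat set \<Rightarrow> qop \<Rightarrow> qop" where
  "ptrace d N S \<rho> = (\<lambda>i i'. if i \<in> cfgs d S \<and> i' \<in> cfgs d S
      then (\<Sum>j\<in>cfgs d ({..<N} - S). \<rho> (merge S i j) (merge S i' j)) else 0)"

text \<open>A \<otimes> I on the full space, A acting on the S-subsystem.\<close>
definition ext_op :: "(nat \<Rightarrow> nat) \<Rightarrow> nat \<Rightarrow> nat set \<Rightarrow> qop \<Rightarrow> qop" where
  "ext_op d N S A = (\<lambda>x y. if x \<in> cfgs d {..<N} \<and> y \<in> cfgs d {..<N}
      then A (restr S x) (restr S y) *
           (if restr ({..<N} - S) x = restr ({..<N} - S) y then 1 else 0)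
      else 0)"

definition apply_op :: "(nat \<Rightarrow> nat) \<Rightarrow> nat \<Rightarrow> qop \<Rightarrow> (cfg \<Rightarrow> complex) \<Rightarrow> (cfg \<Rightarrow> complex)" where
  "apply_op d N A w = (\<lambda>x. if x \<in> cfgs d {..<N} then (\<Sum>y\<in>cfgs d {..<N}. A x y * w y) else 0)"

definition supp_op :: "(nat \<Rightarrow> nat) \<Rightarrow> nat \<Rightarrow> qop \<Rightarrow> (cfg \<Rightarrow> complex) set" where
  "supp_op d N A = range (apply_op d N A)"

definition proj :: "(cfg \<Rightarrow> complex) \<Rightarrow> qop" where
  "proj \<psi> = (\<lambda>x y. \<psi> x * cnj (\<psi> y))"

definition unit_vec :: "(nat \<Rightarrow> nat) \<Rightarrow> nat \<Rightarrow> (cfg \<Rightarrow> complex) \<Rightarrow> bool" where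
  "unit_vec d N \<psi> \<longleftrightarrow> vec_on d {..<N} \<psi> \<and> (\<Sum>x\<in>cfgs d {..<N}. (cmod (\<psi> x))\<^sup>2) = 1"

definition expect :: "(nat \<Rightarrow> nat) \<Rightarrow> nat \<Rightarrow> qop \<Rightarrow> (cfg \<Rightarrow> complex) \<Rightarrow> complex" where
  "expect d N W \<phi> = (\<Sum>x\<in>cfgs d {..<N}. \<Sum>y\<in>cfgs d {..<N}. cnj (\<phi> x) * W x y * \<phi> y)"

definition neighborhood_structure :: "nat \<Rightarrow> nat set set \<Rightarrow> bool" where
  "neighborhood_structure N NS \<longleftrightarrow> finite NS \<and> (\<forall>S\<in>NS. S \<subset> {..<N})"

definition nontrivial_ns :: "nat \<Rightarrow> nat set set \<Rightarrow> bool" where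
  "nontrivial_ns N NS \<longleftrightarrow> \<Union>NS = {..<N} \<and> (\<forall>A\<in>NS. \<exists>B\<in>NS. B \<noteq> A \<and> A \<inter> B \<noteq> {})"

definition dqls :: "(nat \<Rightarrow> nat) \<Rightarrow> nat \<Rightarrow> nat set set \<Rightarrow> (cfg \<Rightarrow> complex) \<Rightarrow> (cfg \<Rightarrow> complex) set" where
  "dqls d N NS \<psi> = (\<Inter>S\<in>NS. supp_op d N (ext_op d N S (ptrace d N S (proj \<psi>))))"

definition UDA :: "(nat \<Rightarrow> nat) \<Rightarrow> nat \<Rightarrow> nat set set \<Rightarrow> qop \<Rightarrow> bool" where
  "UDA d N NS \<rho> \<longleftrightarrow> (\<forall>\<sigma>. density_op d N \<sigma> \<and> (\<forall>S\<in>NS. ptrace d N S \<sigma> = ptrace d N S \<rho>)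
      \<longrightarrow> \<sigma> = \<rho>)"

end

theory Submission
  imports Defs "HOL-Library.FuncSet"
begin

text \<open>Let \<open>\<sigma>\<close> be a state with the same marginals as \<open>\<rho> = |\<psi>\<rangle>\<langle>\<psi>|\<close> on every
  neighbourhood. Write \<open>\<sigma> = \<Sum>\<^sub>k |b\<^sub>k\<rangle>\<langle>b\<^sub>k|\<close> with every \<open>b\<^sub>k\<close> in the range of \<open>\<sigma>\<close>.
  That range lies in the support of \<open>\<sigma>\<^sub>S \<otimes> I = \<rho>\<^sub>S \<otimes> I\<close> for every neighbourhood \<open>S\<close>,
  so each \<open>b\<^sub>k\<close> lies in the DQLS subspace. As \<open>W\<close> is a sum of local terms, \<open>tr(W\<sigma>)\<close>
  depends only on the marginals, hence
  \<open>\<Sum>\<^sub>k \<langle>b\<^sub>k|W|b\<^sub>k\<rangle> = \<langle>\<psi>|W|\<psi>\<rangle> = \<Sum>\<^sub>k \<parallel>b\<^sub>k\<parallel>\<^sup>2 \<langle>\<psi>|W|\<psi>\<rangle>\<close>.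
  By the gap hypothesis each \<open>\<langle>b\<^sub>k|W|b\<^sub>k\<rangle> - \<parallel>b\<^sub>k\<parallel>\<^sup>2 \<langle>\<psi>|W|\<psi>\<rangle>\<close> is nonnegative
  and vanishes only if \<open>|b\<^sub>k\<rangle>\<langle>b\<^sub>k| = \<parallel>b\<^sub>k\<parallel>\<^sup>2 \<rho>\<close>; so \<open>\<sigma> = \<rho>\<close>.\<close>

section \<open>Configurations of subsystems\<close>

lemma finite_cfgs:
  assumes S: "finite S"
  shows "finite (cfgs d S)"
proof -
  have "cfgs d S \<subseteq> (\<lambda>f a. if a \<in> S then f a else 0) ` (\<Pi>\<^sub>E a\<in>S. {..<d a})"
  proof
    fix i assume i: "i \<in> cfgs d S"
    have "i = (\<lambda>a. if a \<in> S then restrict i S a else 0)"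
      using i by (auto simp: cfgs_def fun_eq_iff)
    moreover have "restrict i S \<in> (\<Pi>\<^sub>E a\<in>S. {..<d a})"
      using i by (auto simp: cfgs_def)
    ultimately show "i \<in> (\<lambda>f a. if a \<in> S then f a else 0) ` (\<Pi>\<^sub>E a\<in>S. {..<d a})"
      by blast
  qed
  moreover have "finite (\<Pi>\<^sub>E a\<in>S. {..<d a})"
    using S by (intro finite_PiE) auto
  ultimately show ?thesis
    by (meson finite_surj)
qed

lemma merge_in_cfgs:
  "S \<subseteq> {..<N} \<Longrightarrow> i \<in> cfgs d S \<Longrightarrow> j \<in> cfgs d ({..<N} - S) \<Longrightarrow> merge S i j \<in> cfgs d {..<N}"
  by (auto simp: cfgs_def merge_def)

lemma restr_merge: "i \<in> cfgs d S \<Longrightarrow> restr S (merge S i j) = i"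
  by (auto simp: cfgs_def merge_def restr_def fun_eq_iff)

lemma restr_compl_merge: "j \<in> cfgs d ({..<N} - S) \<Longrightarrow> restr ({..<N} - S) (merge S i j) = j"
  by (auto simp: cfgs_def merge_def restr_def fun_eq_iff)

lemma merge_restr: "x \<in> cfgs d {..<N} \<Longrightarrow> merge S (restr S x) (restr ({..<N} - S) x) = x"
  by (auto simp: cfgs_def merge_def restr_def fun_eq_iff)

lemma restr_in_cfgs: "S \<subseteq> {..<N} \<Longrightarrow> x \<in> cfgs d {..<N} \<Longrightarrow> restr S x \<in> cfgs d S"
  by (auto simp: cfgs_def restr_def)

lemma restr_compl_in_cfgs: "x \<in> cfgs d {..<N} \<Longrightarrow> restr ({..<N} - S) x \<in> cfgs d ({..<N} - S)"
  by (auto simp: cfgs_def restr_def)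

lemma bij_betw_merge:
  assumes "S \<subseteq> {..<N}"
  shows "bij_betw (\<lambda>(i, j). merge S i j) (cfgs d S \<times> cfgs d ({..<N} - S)) (cfgs d {..<N})"
  by (rule bij_betw_byWitness[where f' = "\<lambda>x. (restr S x, restr ({..<N} - S) x)"])
     (use assms in \<open>auto simp: restr_merge restr_compl_merge merge_restr merge_in_cfgs
                          restr_in_cfgs restr_compl_in_cfgs\<close>)

lemma sum_cfgs_merge:
  assumes "S \<subseteq> {..<N}"
  shows "(\<Sum>x\<in>cfgs d {..<N}. f x) = (\<Sum>i\<in>cfgs d S. \<Sum>j\<in>cfgs d ({..<N} - S). f (merge S i j))"
  using sum.reindex_bij_betw[OF bij_betw_merge[OF assms], of f]
  by (simp add: sum.cartesian_product split_def)

section \<open>Hermitian forms on a finite index set\<close>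

definition inner_on :: "'a set \<Rightarrow> ('a \<Rightarrow> complex) \<Rightarrow> ('a \<Rightarrow> complex) \<Rightarrow> complex" where
  "inner_on X u v = (\<Sum>x\<in>X. cnj (u x) * v x)"

definition sqnorm_on :: "'a set \<Rightarrow> ('a \<Rightarrow> complex) \<Rightarrow> real" where
  "sqnorm_on X v = (\<Sum>x\<in>X. (cmod (v x))\<^sup>2)"

definition mat_vec :: "'a set \<Rightarrow> ('a \<Rightarrow> 'a \<Rightarrow> complex) \<Rightarrow> ('a \<Rightarrow> complex) \<Rightarrow> 'a \<Rightarrow> complex" where
  "mat_vec X M v = (\<lambda>x. \<Sum>y\<in>X. M x y * v y)"

definition qform :: "'a set \<Rightarrow> ('a \<Rightarrow> 'a \<Rightarrow> complex) \<Rightarrow> ('a \<Rightarrow> complex) \<Rightarrow> ('a \<Rightarrow> complex) \<Rightarrow> complex" where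
  "qform X M u v = (\<Sum>x\<in>X. \<Sum>y\<in>X. cnj (u x) * M x y * v y)"

definition hermitian :: "('a \<Rightarrow> 'a \<Rightarrow> complex) \<Rightarrow> bool" where
  "hermitian M \<longleftrightarrow> (\<forall>x y. M y x = cnj (M x y))"

definition psd_on :: "'a set \<Rightarrow> ('a \<Rightarrow> 'a \<Rightarrow> complex) \<Rightarrow> bool" where
  "psd_on X M \<longleftrightarrow> (\<forall>v. 0 \<le> Re (qform X M v v))"

lemma cnj_of_bool [simp]: "cnj (of_bool b) = of_bool b"
  by (cases b) simp_all

definition basis_vec :: "'a \<Rightarrow> 'a \<Rightarrow> complex" where
  "basis_vec x0 = (\<lambda>x. of_bool (x = x0))"

lemma cnj_inner_on: "cnj (inner_on X u v) = inner_on X v u"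
  by (simp add: inner_on_def mult.commute)

lemma inner_on_self: "inner_on X v v = of_real (sqnorm_on X v)"
  unfolding inner_on_def sqnorm_on_def of_real_sum
  by (rule sum.cong[OF refl]) (metis complex_norm_square mult.commute)

lemma inner_on_self_eq_0D:
  assumes "finite X" "inner_on X v v = 0" "x \<in> X"
  shows "v x = 0"
proof -
  have "sqnorm_on X v = 0"
    by (metis assms(2) inner_on_self of_real_eq_0_iff)
  then show ?thesis
    using assms(1,3) by (simp add: sqnorm_on_def sum_nonneg_eq_0_iff)
qed

lemma inner_on_lincomb_left:
  "inner_on X (\<lambda>x. (\<Sum>y\<in>Y. c y * u y x) + p x) r = (\<Sum>y\<in>Y. cnj (c y) * inner_on X (u y) r) + inner_on X p r"
  by (simp add: inner_on_def sum_distrib_left sum_distrib_right distrib_right sum.distrib mult.assoc)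
     (subst sum.swap, simp add: mult.assoc)

lemma orthogonal_decomposition:
  assumes X: "finite X" and Y: "finite Y"
  shows "\<exists>c r. (\<forall>x\<in>X. w x = (\<Sum>y\<in>Y. c y * u y x) + r x) \<and> (\<forall>y\<in>Y. inner_on X (u y) r = 0)"
  using Y
proof (induction Y arbitrary: w rule: finite_induct)
  case empty
  show ?case by (rule exI[of _ "\<lambda>_. 0"], rule exI[of _ w]) simp
next
  case (insert y0 Y)
  obtain c1 r1 where c1: "\<forall>x\<in>X. w x = (\<Sum>y\<in>Y. c1 y * u y x) + r1 x"
    and r1: "\<forall>y\<in>Y. inner_on X (u y) r1 = 0"
    using insert.IH by blast
  obtain c2 q where c2: "\<forall>x\<in>X. u y0 x = (\<Sum>y\<in>Y. c2 y * u y x) + q x"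
    and q: "\<forall>y\<in>Y. inner_on X (u y) q = 0"
    using insert.IH by blast
  have u0: "inner_on X (u y0) r = (\<Sum>y\<in>Y. cnj (c2 y) * inner_on X (u y) r) + inner_on X q r" for r
  proof -
    have "inner_on X (u y0) r = inner_on X (\<lambda>x. (\<Sum>y\<in>Y. c2 y * u y x) + q x) r"
      unfolding inner_on_def using c2 by (intro sum.cong) auto
    then show ?thesis by (simp add: inner_on_lincomb_left)
  qed
  show ?case
  proof (cases "inner_on X q q = 0")
    case True
    then have "\<forall>x\<in>X. q x = 0"
      using inner_on_self_eq_0D[OF X] by blast
    then have "inner_on X q r1 = 0"
      by (simp add: inner_on_def)
    then have "inner_on X (u y0) r1 = 0" using u0 r1 by simp
    then show ?thesis using insert c1 r1
      by (intro exI[of _ "c1(y0 := 0)"] exI[of _ r1]) (auto intro!: sum.cong)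
  next
    case False
    define \<alpha> where "\<alpha> = inner_on X q r1 / inner_on X q q"
    define r where "r = (\<lambda>x. r1 x - \<alpha> * q x)"
    define c where "c = (\<lambda>y. c1 y - \<alpha> * c2 y)(y0 := \<alpha>)"
    have r_inner: "inner_on X v r = inner_on X v r1 - \<alpha> * inner_on X v q" for v
      by (simp add: inner_on_def r_def sum_subtractf right_diff_distrib sum_distrib_left
          mult.assoc mult.left_commute)
    have orth_Y: "\<forall>y\<in>Y. inner_on X (u y) r = 0" using r_inner r1 q by simp
    have "inner_on X q r = 0" using r_inner False by (simp add: \<alpha>_def)
    then have orth_y0: "inner_on X (u y0) r = 0" using u0 orth_Y by simp
    have "w x = (\<Sum>y\<in>insert y0 Y. c y * u y x) + r x" if x: "x \<in> X" for x
    proof -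
      have "(\<Sum>y\<in>Y. c y * u y x) = (\<Sum>y\<in>Y. c1 y * u y x - \<alpha> * (c2 y * u y x))"
        using insert(2) by (intro sum.cong) (auto simp: c_def algebra_simps)
      then have "(\<Sum>y\<in>Y. c y * u y x) = (\<Sum>y\<in>Y. c1 y * u y x) - \<alpha> * (\<Sum>y\<in>Y. c2 y * u y x)"
        by (simp add: sum_subtractf sum_distrib_left)
      then show ?thesis using insert(1,2) c1 c2 x
        by (simp add: c_def r_def algebra_simps)
    qed
    then show ?thesis using orth_Y orth_y0 by blast
  qed
qed

lemma in_span_if_orthogonal_to_perp:
  assumes X: "finite X" and Y: "finite Y"
    and perp: "\<And>v. (\<forall>y\<in>Y. inner_on X v (u y) = 0) \<Longrightarrow> inner_on X v w = 0"
  shows "\<exists>c. \<forall>x\<in>X. w x = (\<Sum>y\<in>Y. c y * u y x)"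
proof -
  obtain c r where cr: "\<forall>x\<in>X. w x = (\<Sum>y\<in>Y. c y * u y x) + r x"
    and orth: "\<forall>y\<in>Y. inner_on X (u y) r = 0"
    using orthogonal_decomposition[OF X Y] by blast
  have orth': "\<forall>y\<in>Y. inner_on X r (u y) = 0"
    using orth by (metis cnj_inner_on complex_cnj_zero)
  have "inner_on X r w = inner_on X r (\<lambda>x. (\<Sum>y\<in>Y. c y * u y x) + r x)"
    unfolding inner_on_def using cr by (intro sum.cong) auto
  also have "\<dots> = (\<Sum>y\<in>Y. c y * inner_on X r (u y)) + inner_on X r r"
    by (simp add: inner_on_def distrib_left sum.distrib sum_distrib_left)
       (subst sum.swap, simp add: algebra_simps)
  finally have "inner_on X r r = 0"
    using perp[OF orth'] orth' by simp
  then have "\<forall>x\<in>X. r x = 0"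
    using inner_on_self_eq_0D[OF X] by blast
  then show ?thesis
    using cr by (intro exI[of _ c]) simp
qed

lemma qform_add_left: "qform X M (\<lambda>x. a x + c * b x) v = qform X M a v + cnj c * qform X M b v"
  by (simp add: qform_def distrib_left distrib_right sum.distrib sum_distrib_left mult.assoc)

lemma qform_add_right: "qform X M u (\<lambda>x. a x + c * b x) = qform X M u a + c * qform X M u b"
  by (simp add: qform_def distrib_left distrib_right sum.distrib sum_distrib_left mult.assoc
      mult.left_commute)

lemma hermitian_cnj: "hermitian M \<Longrightarrow> cnj (M x y) = M y x"
  unfolding hermitian_def by metis

lemma cnj_qform:
  assumes "hermitian M"
  shows "cnj (qform X M u v) = qform X M v u"
proof -
  have "cnj (qform X M u v) = (\<Sum>x\<in>X. \<Sum>y\<in>X. cnj (v y) * M y x * u x)"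
    by (simp add: qform_def hermitian_cnj[OF assms] mult.commute mult.left_commute)
  also have "\<dots> = qform X M v u"
    unfolding qform_def by (rule sum.swap)
  finally show ?thesis .
qed

lemma qform_eq_inner_mat_vec: "qform X M u v = inner_on X u (mat_vec X M v)"
  by (simp add: qform_def inner_on_def mat_vec_def sum_distrib_left mult.assoc)

lemma qform_basis_left:
  "finite X \<Longrightarrow> x0 \<in> X \<Longrightarrow> qform X M (basis_vec x0) v = mat_vec X M v x0"
  by (simp add: qform_def mat_vec_def basis_vec_def mult.assoc flip: sum_distrib_left)

lemma qform_basis_right:
  "finite X \<Longrightarrow> x0 \<in> X \<Longrightarrow> qform X M v (basis_vec x0) = (\<Sum>x\<in>X. cnj (v x) * M x x0)"
  by (simp add: qform_def basis_vec_def)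

lemma qform_basis_basis:
  "finite X \<Longrightarrow> x0 \<in> X \<Longrightarrow> qform X M (basis_vec x0) (basis_vec x0) = M x0 x0"
  by (simp add: qform_basis_left) (simp add: mat_vec_def basis_vec_def)

text \<open>Minimise the form along the line \<open>v - t M v\<close>.\<close>
lemma psd_qform_eq_0_imp_mat_vec_eq_0:
  assumes X: "finite X" and H: "hermitian M" and P: "psd_on X M" and Z: "Re (qform X M v v) = 0"
  shows "\<forall>x\<in>X. mat_vec X M v x = 0"
proof -
  define z where "z = mat_vec X M v"
  define s where "s = sqnorm_on X z"
  define Q where "Q = Re (qform X M z z)"
  have Q0: "0 \<le> Q" using P by (simp add: psd_on_def Q_def)
  have zv: "qform X M z v = of_real s"
    by (simp add: qform_eq_inner_mat_vec inner_on_self z_def s_def)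
  have vz: "qform X M v z = of_real s"
    using cnj_qform[OF H, of X z v] zv by simp
  have key: "0 \<le> - 2 * t * s + t * t * Q" for t :: real
  proof -
    have "0 \<le> Re (qform X M (\<lambda>x. v x + of_real (- t) * z x) (\<lambda>x. v x + of_real (- t) * z x))"
      using P by (simp add: psd_on_def)
    also have "\<dots> = Re (qform X M v v) - 2 * t * s + t * t * Q"
      unfolding qform_add_left qform_add_right zv vz Q_def by (simp add: algebra_simps)
    finally show ?thesis using Z by simp
  qed
  have "0 \<le> (Q + 1)\<^sup>2 * (- 2 * (s / (Q + 1)) * s + (s / (Q + 1)) * (s / (Q + 1)) * Q)"
    using key[of "s / (Q + 1)"] by (intro mult_nonneg_nonneg) simp_all
  also have "\<dots> = - (s * s * (Q + 2))"
    using Q0 by (simp add: field_simps power2_eq_square add_pos_nonneg[THEN less_imp_neq, symmetric])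
  finally have "s * s \<le> 0"
    using Q0 by (simp add: mult_le_0_iff)
  then have "s = 0"
    by (auto simp: mult_le_0_iff)
  then have "inner_on X z z = 0" by (simp add: inner_on_self s_def)
  then show ?thesis
    using inner_on_self_eq_0D[OF X] unfolding z_def by blast
qed

lemma psd_diag_eq_0_imp_eq_0:
  assumes X: "finite X" and H: "hermitian M" and P: "psd_on X M" and x: "x \<in> X" and z: "M x x = 0"
    and y: "y \<in> X"
  shows "M y x = 0" and "M x y = 0"
proof -
  have "Re (qform X M (basis_vec x) (basis_vec x)) = 0"
    using qform_basis_basis[OF X x] z by simp
  then have "mat_vec X M (basis_vec x) y = 0"
    using psd_qform_eq_0_imp_mat_vec_eq_0[OF X H P] y by blast
  then show "M y x = 0"
    using X x by (simp add: mat_vec_def basis_vec_def)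
  then show "M x y = 0"
    using hermitian_cnj[OF H, of y x] by simp
qed

lemma psd_diag_real_nonneg:
  assumes X: "finite X" and H: "hermitian M" and P: "psd_on X M" and x: "x \<in> X"
  shows "M x x = of_real (Re (M x x))" and "0 \<le> Re (M x x)"
proof -
  have "M x x \<in> \<real>"
    using hermitian_cnj[OF H, of x x] by (simp add: Reals_cnj_iff)
  then show "M x x = of_real (Re (M x x))" by simp
  show "0 \<le> Re (M x x)"
    using P qform_basis_basis[OF X x, of M] unfolding psd_on_def by metis
qed

definition schur_compl :: "('a \<Rightarrow> 'a \<Rightarrow> complex) \<Rightarrow> 'a \<Rightarrow> 'a \<Rightarrow> 'a \<Rightarrow> complex" where
  "schur_compl M x0 = (\<lambda>x y. M x y - M x x0 * M x0 y / M x0 x0)"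

lemma hermitian_schur_compl:
  assumes "hermitian M"
  shows "hermitian (schur_compl M x0)"
  unfolding hermitian_def schur_compl_def by (simp add: hermitian_cnj[OF assms] mult.commute)

lemma mat_vec_schur_compl:
  "mat_vec X (schur_compl M x0) v x = mat_vec X M v x - M x x0 * mat_vec X M v x0 / M x0 x0"
  by (simp add: mat_vec_def schur_compl_def sum_subtractf left_diff_distrib sum_distrib_left
      sum_divide_distrib mult.assoc)

text \<open>The Schur form at \<open>v\<close> is the original form at \<open>v + c e\<^sub>x\<^sub>0\<close> for a suitable \<open>c\<close>.\<close>
lemma psd_schur_compl:
  assumes X: "finite X" and x0: "x0 \<in> X" and H: "hermitian M" and P: "psd_on X M"
    and nz: "M x0 x0 \<noteq> 0"
  shows "psd_on X (schur_compl M x0)"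
  unfolding psd_on_def
proof
  fix v
  define e where "e = basis_vec x0"
  define g where "g = qform X M e v"
  define c where "c = - g / M x0 x0"
  have ve: "qform X M v e = cnj g"
    using cnj_qform[OF H, of X e v] by (simp add: g_def)
  have "qform X (schur_compl M x0) v v
      = qform X M v v - (\<Sum>x\<in>X. \<Sum>y\<in>X. (cnj (v x) * M x x0) * (M x0 y * v y) / M x0 x0)"
    by (simp add: qform_def schur_compl_def sum_subtractf right_diff_distrib left_diff_distrib
        mult.assoc)
  also have "(\<Sum>x\<in>X. \<Sum>y\<in>X. (cnj (v x) * M x x0) * (M x0 y * v y) / M x0 x0)
      = (\<Sum>x\<in>X. cnj (v x) * M x x0) * (\<Sum>y\<in>X. M x0 y * v y) / M x0 x0"
    by (simp add: sum_distrib_left sum_distrib_right sum_divide_distrib, subst sum.swap, rule refl)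
  also have "\<dots> = cnj g * g / M x0 x0"
    using qform_basis_right[OF X x0, of M v] qform_basis_left[OF X x0, of M v] ve
    by (simp add: e_def g_def mat_vec_def)
  also have "qform X M v v - \<dots> = qform X M v v + c * cnj g + cnj c * g + cnj c * c * M x0 x0"
    using nz hermitian_cnj[OF H, of x0 x0] by (simp add: c_def field_simps)
  also have "\<dots> = qform X M (\<lambda>x. v x + c * e x) (\<lambda>x. v x + c * e x)"
    unfolding qform_add_left qform_add_right ve g_def[symmetric]
    using qform_basis_basis[OF X x0, of M] by (simp add: e_def algebra_simps)
  finally show "0 \<le> Re (qform X (schur_compl M x0) v v)"
    using P by (simp add: psd_on_def)
qed

lemma diag_support_schur_compl:
  assumes X: "finite X" and x0: "x0 \<in> X" and H: "hermitian M" and P: "psd_on X M"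
    and nz: "M x0 x0 \<noteq> 0"
  shows "{x\<in>X. schur_compl M x0 x x \<noteq> 0} \<subset> {x\<in>X. M x x \<noteq> 0}"
proof -
  have "{x\<in>X. schur_compl M x0 x x \<noteq> 0} \<subseteq> {x\<in>X. M x x \<noteq> 0} - {x0}"
  proof
    fix x assume x: "x \<in> {x\<in>X. schur_compl M x0 x x \<noteq> 0}"
    have "x \<noteq> x0" using x nz by (auto simp: schur_compl_def)
    moreover have "M x x \<noteq> 0"
      using x psd_diag_eq_0_imp_eq_0[OF X H P, of x x0] x0 by (auto simp: schur_compl_def)
    ultimately show "x \<in> {x\<in>X. M x x \<noteq> 0} - {x0}" using x by auto
  qed
  then show ?thesis using x0 nz by auto
qed

definition rank_one_decomp ::
    "'a set \<Rightarrow> ('a \<Rightarrow> 'a \<Rightarrow> complex) \<Rightarrow> nat \<Rightarrow> (nat \<Rightarrow> 'a \<Rightarrow> complex) \<Rightarrow> bool" where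
  "rank_one_decomp X M n b \<longleftrightarrow>
     (\<forall>x\<in>X. \<forall>y\<in>X. M x y = (\<Sum>k<n. b k x * cnj (b k y)))
     \<and> (\<forall>k<n. \<forall>x. x \<notin> X \<longrightarrow> b k x = 0)
     \<and> (\<forall>k<n. \<forall>v. (\<forall>x\<in>X. mat_vec X M v x = 0) \<longrightarrow> inner_on X v (b k) = 0)"

text \<open>The new term is the normalised column of \<open>M\<close> at \<open>x\<^sub>0\<close>, hence orthogonal to the kernel.\<close>
lemma rank_one_decomp_of_schur_compl:
  assumes X: "finite X" and x0: "x0 \<in> X" and H: "hermitian M" and P: "psd_on X M"
    and nz: "M x0 x0 \<noteq> 0" and dec: "rank_one_decomp X (schur_compl M x0) n b"
  shows "\<exists>b'. rank_one_decomp X M (Suc n) b'"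
proof -
  define m where "m = Re (M x0 x0)"
  have Mm: "M x0 x0 = of_real m" and "0 \<le> m"
    unfolding m_def by (fact psd_diag_real_nonneg[OF X H P x0])+
  then have sq: "of_real (sqrt m) * of_real (sqrt m) = M x0 x0"
    by (simp flip: of_real_mult)
  define b0 where "b0 = (\<lambda>x. if x \<in> X then M x x0 / of_real (sqrt m) else 0)"
  define b' where "b' = (\<lambda>k. if k < n then b k else b0)"
  have "M x y = (\<Sum>k<Suc n. b' k x * cnj (b' k y))" if "x \<in> X" "y \<in> X" for x y
  proof -
    have "(\<Sum>k<Suc n. b' k x * cnj (b' k y)) = schur_compl M x0 x y + b0 x * cnj (b0 y)"
      using dec that by (simp add: rank_one_decomp_def b'_def)
    also have "\<dots> = M x y"
      using that by (simp add: b0_def schur_compl_def hermitian_cnj[OF H] flip: sq)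
    finally show ?thesis ..
  qed
  moreover have "\<forall>k<Suc n. \<forall>x. x \<notin> X \<longrightarrow> b' k x = 0"
    using dec by (simp add: rank_one_decomp_def b'_def b0_def)
  moreover have "inner_on X v (b' k) = 0"
    if k: "k < Suc n" and v: "\<forall>x\<in>X. mat_vec X M v x = 0" for k v
  proof (cases "k < n")
    case True
    have "\<forall>x\<in>X. mat_vec X (schur_compl M x0) v x = 0"
      using v x0 by (simp add: mat_vec_schur_compl)
    then show ?thesis using dec True by (simp add: rank_one_decomp_def b'_def)
  next
    case False
    have "inner_on X v b0 = qform X M v (basis_vec x0) / of_real (sqrt m)"
      using qform_basis_right[OF X x0, of M v] by (simp add: inner_on_def b0_def sum_divide_distrib)
    also have "qform X M v (basis_vec x0) = cnj (mat_vec X M v x0)"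
      using cnj_qform[OF H, of X "basis_vec x0" v] qform_basis_left[OF X x0, of M v] by simp
    finally show ?thesis using False v x0 by (simp add: b'_def)
  qed
  ultimately show ?thesis
    unfolding rank_one_decomp_def by blast
qed

lemma psd_rank_one_decomp:
  assumes X: "finite X" and H: "hermitian M" and P: "psd_on X M"
  shows "\<exists>n b. rank_one_decomp X M n b"
  using H P
proof (induction "card {x\<in>X. M x x \<noteq> 0}" arbitrary: M rule: less_induct)
  case less
  note H = less.prems(1) and P = less.prems(2)
  show ?case
  proof (cases "\<exists>x0\<in>X. M x0 x0 \<noteq> 0")
    case False
    then have "\<forall>x\<in>X. \<forall>y\<in>X. M x y = 0"
      using psd_diag_eq_0_imp_eq_0[OF X H P] by blast
    then have "rank_one_decomp X M 0 b" for b
      by (simp add: rank_one_decomp_def)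
    then show ?thesis by blast
  next
    case True
    then obtain x0 where x0: "x0 \<in> X" and nz: "M x0 x0 \<noteq> 0" by blast
    have "card {x\<in>X. schur_compl M x0 x x \<noteq> 0} < card {x\<in>X. M x x \<noteq> 0}"
      using diag_support_schur_compl[OF X x0 H P nz] X by (intro psubset_card_mono) auto
    then obtain n b where "rank_one_decomp X (schur_compl M x0) n b"
      using less.hyps hermitian_schur_compl[OF H] psd_schur_compl[OF X x0 H P nz] by blast
    then show ?thesis
      using rank_one_decomp_of_schur_compl[OF X x0 H P nz] by blast
  qed
qed

section \<open>Partial traces\<close>

definition tr_mult :: "'a set \<Rightarrow> ('a \<Rightarrow> 'a \<Rightarrow> complex) \<Rightarrow> ('a \<Rightarrow> 'a \<Rightarrow> complex) \<Rightarrow> complex" where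
  "tr_mult X A B = (\<Sum>x\<in>X. \<Sum>y\<in>X. A x y * B y x)"

lemma ext_op_merge:
  assumes "S \<subseteq> {..<N}" "i \<in> cfgs d S" "i' \<in> cfgs d S"
    "j \<in> cfgs d ({..<N} - S)" "j' \<in> cfgs d ({..<N} - S)"
  shows "ext_op d N S B (merge S i j) (merge S i' j') = (if j = j' then B i i' else 0)"
  using assms by (simp add: ext_op_def merge_in_cfgs restr_merge restr_compl_merge)

lemma tr_mult_ext_op:
  assumes S: "S \<subseteq> {..<N}"
  shows "tr_mult (cfgs d {..<N}) (ext_op d N S B) M = tr_mult (cfgs d S) B (ptrace d N S M)"
proof -
  let ?C = "cfgs d S" and ?D = "cfgs d ({..<N} - S)"
  have "tr_mult (cfgs d {..<N}) (ext_op d N S B) M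
     = (\<Sum>i\<in>?C. \<Sum>j\<in>?D. \<Sum>i'\<in>?C. \<Sum>j'\<in>?D.
          ext_op d N S B (merge S i j) (merge S i' j') * M (merge S i' j') (merge S i j))"
    unfolding tr_mult_def by (simp only: sum_cfgs_merge[OF S])
  also have "\<dots> = (\<Sum>i\<in>?C. \<Sum>i'\<in>?C. \<Sum>j\<in>?D. B i i' * M (merge S i' j) (merge S i j))"
    by (subst sum.swap) (simp add: S finite_cfgs ext_op_merge if_distrib[of "\<lambda>z. z * _"] cong: if_cong)
  also have "\<dots> = tr_mult (cfgs d S) B (ptrace d N S M)"
    by (simp add: tr_mult_def ptrace_def sum_distrib_left)
  finally show ?thesis .
qed

text \<open>\<open>block_vec d N S v j k\<close> is the vector \<open>(I \<otimes> |k\<rangle>\<langle>j|) v\<close>, the identity acting on \<open>S\<close>.\<close>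
definition block_vec :: "(nat \<Rightarrow> nat) \<Rightarrow> nat \<Rightarrow> nat set \<Rightarrow> (cfg \<Rightarrow> complex) \<Rightarrow> cfg \<Rightarrow> cfg \<Rightarrow> cfg \<Rightarrow> complex" where
  "block_vec d N S v j k = (\<lambda>x. if x \<in> cfgs d {..<N} \<and> restr ({..<N} - S) x = k
      then v (merge S (restr S x) j) else 0)"

lemma block_vec_merge:
  assumes "S \<subseteq> {..<N}" "i \<in> cfgs d S" "k' \<in> cfgs d ({..<N} - S)"
  shows "block_vec d N S v j k (merge S i k') = (if k' = k then v (merge S i j) else 0)"
  using assms by (auto simp: block_vec_def merge_in_cfgs restr_merge restr_compl_merge)

lemma sum_block_vec_diag:
  assumes "x \<in> cfgs d {..<N}"
  shows "(\<Sum>j\<in>cfgs d ({..<N} - S). block_vec d N S v j j x) = v x"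
  using assms by (simp add: block_vec_def finite_cfgs restr_compl_in_cfgs merge_restr)

lemma qform_block_vec:
  assumes S: "S \<subseteq> {..<N}" and k: "k \<in> cfgs d ({..<N} - S)"
  shows "qform (cfgs d {..<N}) M (block_vec d N S v j k) (block_vec d N S v j k)
    = (\<Sum>i\<in>cfgs d S. \<Sum>i'\<in>cfgs d S.
         cnj (v (merge S i j)) * M (merge S i k) (merge S i' k) * v (merge S i' j))"
  unfolding qform_def
  by (simp add: sum_cfgs_merge[OF S] block_vec_merge[OF S] finite_cfgs k
      if_distrib[of "\<lambda>z. z * _"] if_distrib[of "\<lambda>z. _ * z"] if_distrib[of cnj] cong: if_cong)
     (rule sum.cong[OF refl], subst sum.swap, simp add: finite_cfgs k)

lemma qform_ext_ptrace:
  assumes S: "S \<subseteq> {..<N}"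
  shows "qform (cfgs d {..<N}) (ext_op d N S (ptrace d N S M)) v v
       = (\<Sum>j\<in>cfgs d ({..<N} - S). \<Sum>k\<in>cfgs d ({..<N} - S).
            qform (cfgs d {..<N}) M (block_vec d N S v j k) (block_vec d N S v j k))"
proof -
  let ?C = "cfgs d S" and ?D = "cfgs d ({..<N} - S)"
  have "qform (cfgs d {..<N}) (ext_op d N S (ptrace d N S M)) v v
     = (\<Sum>i\<in>?C. \<Sum>j\<in>?D. \<Sum>i'\<in>?C. \<Sum>k\<in>?D.
          cnj (v (merge S i j)) * M (merge S i k) (merge S i' k) * v (merge S i' j))"
    unfolding qform_def
    by (simp add: sum_cfgs_merge[OF S] S finite_cfgs ext_op_merge ptrace_def
        sum_distrib_left sum_distrib_right if_distrib[of "\<lambda>z. z * _"] if_distrib[of "\<lambda>z. _ * z"]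
        cong: if_cong)
  also have "\<dots> = (\<Sum>j\<in>?D. \<Sum>k\<in>?D. \<Sum>i\<in>?C. \<Sum>i'\<in>?C.
          cnj (v (merge S i j)) * M (merge S i k) (merge S i' k) * v (merge S i' j))"
    by (simp only: sum.swap[of _ ?D ?C])
  also have "\<dots> = (\<Sum>j\<in>?D. \<Sum>k\<in>?D.
          qform (cfgs d {..<N}) M (block_vec d N S v j k) (block_vec d N S v j k))"
    by (simp add: qform_block_vec[OF S])
  finally show ?thesis .
qed

lemma qform_ext_ptrace_eq_0_imp_mat_vec_eq_0:
  assumes S: "S \<subseteq> {..<N}" and H: "hermitian M" and P: "psd_on (cfgs d {..<N}) M"
    and Z: "qform (cfgs d {..<N}) (ext_op d N S (ptrace d N S M)) v v = 0"
  shows "\<forall>x\<in>cfgs d {..<N}. mat_vec (cfgs d {..<N}) M v x = 0"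
proof
  let ?X = "cfgs d {..<N}" and ?D = "cfgs d ({..<N} - S)"
  let ?q = "\<lambda>j k. Re (qform ?X M (block_vec d N S v j k) (block_vec d N S v j k))"
  have finD: "finite ?D" by (simp add: finite_cfgs)
  have nonneg: "0 \<le> ?q j k" for j k
    using P by (simp add: psd_on_def)
  have "(\<Sum>j\<in>?D. \<Sum>k\<in>?D. ?q j k) = 0"
    using arg_cong[OF qform_ext_ptrace[OF S, of d M v], of Re] Z by (simp add: Re_sum)
  then have "\<forall>j\<in>?D. ?q j j = 0"
    using finD nonneg by (simp add: sum_nonneg_eq_0_iff sum_nonneg)
  then have block_null: "\<forall>j\<in>?D. \<forall>x\<in>?X. mat_vec ?X M (block_vec d N S v j j) x = 0"
    using psd_qform_eq_0_imp_mat_vec_eq_0[OF finite_cfgs[OF finite_lessThan] H P] by blast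
  fix x assume x: "x \<in> ?X"
  have "mat_vec ?X M v x = (\<Sum>y\<in>?X. M x y * (\<Sum>j\<in>?D. block_vec d N S v j j y))"
    unfolding mat_vec_def by (intro sum.cong refl) (simp add: sum_block_vec_diag)
  also have "\<dots> = (\<Sum>j\<in>?D. mat_vec ?X M (block_vec d N S v j j) x)"
    unfolding mat_vec_def by (simp add: sum_distrib_left) (rule sum.swap)
  also have "\<dots> = 0"
    using block_null x by simp
  finally show "mat_vec ?X M v x = 0" .
qed

text \<open>The range of a state lies in the support of each of its marginals tensored with the
  identity; being in the range is phrased as being orthogonal to the kernel.\<close>
lemma kernel_orth_in_supp_ext_ptrace:
  assumes S: "S \<subseteq> {..<N}" and H: "hermitian M" and P: "psd_on (cfgs d {..<N}) M"
    and b_on: "\<forall>x. x \<notin> cfgs d {..<N} \<longrightarrow> b x = 0"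
    and b_orth: "\<forall>v. (\<forall>x\<in>cfgs d {..<N}. mat_vec (cfgs d {..<N}) M v x = 0)
                     \<longrightarrow> inner_on (cfgs d {..<N}) v b = 0"
  shows "b \<in> supp_op d N (ext_op d N S (ptrace d N S M))"
proof -
  let ?X = "cfgs d {..<N}"
  define A where "A = ext_op d N S (ptrace d N S M)"
  have finX: "finite ?X" by (simp add: finite_cfgs)
  have "\<exists>c. \<forall>x\<in>?X. b x = (\<Sum>y\<in>?X. c y * A x y)"
  proof (rule in_span_if_orthogonal_to_perp[OF finX finX, where u = "\<lambda>y x. A x y"])
    fix v assume orth: "\<forall>y\<in>?X. inner_on ?X v (\<lambda>x. A x y) = 0"
    have "qform ?X A v v = (\<Sum>y\<in>?X. inner_on ?X v (\<lambda>x. A x y) * v y)"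
      unfolding qform_def inner_on_def by (subst sum.swap) (simp add: sum_distrib_right)
    then have "qform ?X A v v = 0"
      using orth by simp
    then show "inner_on ?X v b = 0"
      using b_orth qform_ext_ptrace_eq_0_imp_mat_vec_eq_0[OF S H P] by (simp add: A_def)
  qed
  then obtain c where c: "\<forall>x\<in>?X. b x = (\<Sum>y\<in>?X. c y * A x y)" by blast
  have "b = apply_op d N A c"
    using c b_on by (auto simp: apply_op_def mult.commute fun_eq_iff)
  then show ?thesis unfolding supp_op_def A_def by blast
qed

section \<open>The variational argument\<close>

lemma supp_op_scale: "u \<in> supp_op d N A \<Longrightarrow> (\<lambda>x. c * u x) \<in> supp_op d N A"
proof -
  assume "u \<in> supp_op d N A"
  then obtain w where "u = apply_op d N A w" by (auto simp: supp_op_def)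
  then have "(\<lambda>x. c * u x) = apply_op d N A (\<lambda>y. c * w y)"
    by (simp add: apply_op_def fun_eq_iff sum_distrib_left mult.left_commute)
  then show ?thesis by (simp add: supp_op_def)
qed

lemma dqls_scale: "\<phi> \<in> dqls d N NS \<psi> \<Longrightarrow> (\<lambda>x. c * \<phi> x) \<in> dqls d N NS \<psi>"
  by (simp add: dqls_def supp_op_scale)

lemma in_dqls_if_same_marginals:
  assumes ns: "\<forall>S\<in>NS. S \<subseteq> {..<N}" and H: "hermitian \<sigma>" and P: "psd_on (cfgs d {..<N}) \<sigma>"
    and marg: "\<forall>S\<in>NS. ptrace d N S \<sigma> = ptrace d N S (proj \<psi>)"
    and b_on: "\<forall>x. x \<notin> cfgs d {..<N} \<longrightarrow> b x = 0"
    and b_orth: "\<forall>v. (\<forall>x\<in>cfgs d {..<N}. mat_vec (cfgs d {..<N}) \<sigma> v x = 0)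
                     \<longrightarrow> inner_on (cfgs d {..<N}) v b = 0"
  shows "b \<in> dqls d N NS \<psi>"
  unfolding dqls_def
proof
  fix S assume "S \<in> NS"
  then show "b \<in> supp_op d N (ext_op d N S (ptrace d N S (proj \<psi>)))"
    using kernel_orth_in_supp_ext_ptrace[OF _ H P b_on b_orth, of S] ns marg by simp
qed

lemma expect_eq_tr_mult_proj: "expect d N W \<phi> = tr_mult (cfgs d {..<N}) W (proj \<phi>)"
  unfolding expect_def tr_mult_def proj_def by (intro sum.cong refl) (simp add: mult_ac)

lemma tr_mult_local_sum:
  assumes "\<forall>S\<in>NS. S \<subseteq> {..<N}"
  shows "tr_mult (cfgs d {..<N}) (\<lambda>x y. \<Sum>S\<in>NS. ext_op d N S (Wloc S) x y) M
    = (\<Sum>S\<in>NS. tr_mult (cfgs d S) (Wloc S) (ptrace d N S M))"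
proof -
  have "tr_mult (cfgs d {..<N}) (\<lambda>x y. \<Sum>S\<in>NS. ext_op d N S (Wloc S) x y) M
      = (\<Sum>S\<in>NS. tr_mult (cfgs d {..<N}) (ext_op d N S (Wloc S)) M)"
    unfolding tr_mult_def sum_distrib_right
    by (subst sum.swap, rule sum.cong[OF refl], rule sum.swap)
  then show ?thesis
    using assms by (simp add: tr_mult_ext_op)
qed

lemma tr_mult_rank_one_sum:
  assumes "\<forall>x\<in>X. \<forall>y\<in>X. \<sigma> x y = (\<Sum>k<n. b k x * cnj (b k y))"
  shows "tr_mult X W \<sigma> = (\<Sum>k<n. tr_mult X W (proj (b k)))"
  using assms by (simp add: tr_mult_def proj_def sum_distrib_left sum.swap[of _ "{..<n}"])

lemma expect_gap_scaled:
  assumes gap: "\<forall>\<phi>. unit_vec d N \<phi> \<and> \<phi> \<in> dqls d N NS \<psi> \<and> proj \<phi> \<noteq> proj \<psi>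
                 \<longrightarrow> Re (expect d N W \<psi>) < Re (expect d N W \<phi>)"
    and b_on: "vec_on d {..<N} b" and b_dqls: "b \<in> dqls d N NS \<psi>"
  defines "E \<equiv> Re (expect d N W \<psi>)" and "nb \<equiv> sqnorm_on (cfgs d {..<N}) b"
  shows "E * nb < Re (expect d N W b)
    \<or> Re (expect d N W b) = E * nb \<and> proj b = (\<lambda>x y. of_real nb * proj \<psi> x y)"
proof (cases "nb = 0")
  case True
  then have "\<forall>x\<in>cfgs d {..<N}. b x = 0"
    unfolding nb_def sqnorm_on_def by (simp add: finite_cfgs sum_nonneg_eq_0_iff)
  then have "b = (\<lambda>_. 0)"
    using b_on by (auto simp: vec_on_def)
  then show ?thesis using True by (simp add: expect_def proj_def)
next
  case False
  then have nb: "nb > 0"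
    unfolding nb_def sqnorm_on_def by (metis order_le_neq_trans sum_nonneg zero_le_power2)
  define \<phi> where "\<phi> = (\<lambda>x. of_real (1 / sqrt nb) * b x)"
  have b_\<phi>: "b = (\<lambda>x. of_real (sqrt nb) * \<phi> x)"
    using nb by (simp add: \<phi>_def fun_eq_iff flip: of_real_mult)
  have "(\<Sum>x\<in>cfgs d {..<N}. (cmod (\<phi> x))\<^sup>2) = sqnorm_on (cfgs d {..<N}) b / nb"
    using nb by (simp add: \<phi>_def sqnorm_on_def norm_divide power_divide sum_divide_distrib)
  also have "\<dots> = 1"
    using nb by (simp add: nb_def)
  finally have "unit_vec d N \<phi>"
    using b_on nb by (simp add: unit_vec_def vec_on_def \<phi>_def)
  moreover have "\<phi> \<in> dqls d N NS \<psi>"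
    unfolding \<phi>_def by (rule dqls_scale[OF b_dqls])
  moreover have "expect d N W b = of_real (sqrt nb) * of_real (sqrt nb) * expect d N W \<phi>"
    unfolding b_\<phi> expect_def by (simp add: sum_distrib_left mult_ac)
  then have "expect d N W b = of_real nb * expect d N W \<phi>"
    using nb by (simp flip: of_real_mult)
  moreover have "proj b = (\<lambda>x y. of_real (sqrt nb) * of_real (sqrt nb) * proj \<phi> x y)"
    unfolding b_\<phi> proj_def by (simp add: fun_eq_iff mult_ac)
  then have "proj b = (\<lambda>x y. of_real nb * proj \<phi> x y)"
    using nb by (simp flip: of_real_mult)
  ultimately show ?thesis
    using gap nb unfolding E_def by (cases "proj \<phi> = proj \<psi>") (auto simp: expect_eq_tr_mult_proj)
qed

lemma density_opD:
  assumes "density_op d N \<sigma>"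
  shows "hermitian \<sigma>" and "psd_on (cfgs d {..<N}) \<sigma>"
    and "(\<Sum>x\<in>cfgs d {..<N}. \<sigma> x x) = 1"
    and "\<forall>x y. x \<notin> cfgs d {..<N} \<or> y \<notin> cfgs d {..<N} \<longrightarrow> \<sigma> x y = 0"
  using assms unfolding density_op_def psd_op_def hermitian_op_def op_on_def hermitian_def
    psd_on_def qform_def by blast+

lemma expect_rank_one_sum_if_same_marginals:
  fixes Wloc :: "nat set \<Rightarrow> qop"
  assumes ns: "\<forall>S\<in>NS. S \<subseteq> {..<N}"
    and marg: "\<forall>S\<in>NS. ptrace d N S \<sigma> = ptrace d N S \<rho>"
    and rep: "\<forall>x\<in>cfgs d {..<N}. \<forall>y\<in>cfgs d {..<N}. \<sigma> x y = (\<Sum>k<n. b k x * cnj (b k y))"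
  defines "W \<equiv> \<lambda>x y. \<Sum>S\<in>NS. ext_op d N S (Wloc S) x y"
  shows "(\<Sum>k<n. Re (expect d N W (b k))) = Re (tr_mult (cfgs d {..<N}) W \<rho>)"
proof -
  have "(\<Sum>k<n. expect d N W (b k)) = tr_mult (cfgs d {..<N}) W \<sigma>"
    by (simp add: expect_eq_tr_mult_proj tr_mult_rank_one_sum[OF rep])
  also have "\<dots> = tr_mult (cfgs d {..<N}) W \<rho>"
    using marg by (simp add: W_def tr_mult_local_sum[OF ns])
  finally show ?thesis
    by (metis Re_sum)
qed

lemma sum_diag_rank_one_sum:
  assumes "\<forall>x\<in>X. \<forall>y\<in>X. \<sigma> x y = (\<Sum>k<n. b k x * cnj (b k y))"
  shows "(\<Sum>x\<in>X. \<sigma> x x) = of_real (\<Sum>k<n. sqnorm_on X (b k))"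
proof -
  have "(\<Sum>x\<in>X. \<sigma> x x) = (\<Sum>k<n. \<Sum>x\<in>X. b k x * cnj (b k x))"
    using assms by (simp add: sum.swap[of _ X])
  also have "\<dots> = of_real (\<Sum>k<n. sqnorm_on X (b k))"
    by (simp only: sqnorm_on_def of_real_sum complex_norm_square)
  finally show ?thesis .
qed

lemma rank_one_sum_eq_proj_if_gap:
  fixes n :: nat
  assumes gap: "\<forall>\<phi>. unit_vec d N \<phi> \<and> \<phi> \<in> dqls d N NS \<psi> \<and> proj \<phi> \<noteq> proj \<psi>
                 \<longrightarrow> Re (expect d N W \<psi>) < Re (expect d N W \<phi>)"
    and b: "\<forall>k<n. vec_on d {..<N} (b k) \<and> b k \<in> dqls d N NS \<psi>"
    and rep: "\<forall>x\<in>cfgs d {..<N}. \<forall>y\<in>cfgs d {..<N}. \<sigma> x y = (\<Sum>k<n. b k x * cnj (b k y))"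
    and norm_sum: "(\<Sum>k<n. sqnorm_on (cfgs d {..<N}) (b k)) = 1"
    and expect_sum: "(\<Sum>k<n. Re (expect d N W (b k))) = Re (expect d N W \<psi>)"
  shows "\<forall>x\<in>cfgs d {..<N}. \<forall>y\<in>cfgs d {..<N}. \<sigma> x y = proj \<psi> x y"
proof -
  define E where "E = Re (expect d N W \<psi>)"
  define nb where "nb = (\<lambda>k. sqnorm_on (cfgs d {..<N}) (b k))"
  define excess where "excess = (\<lambda>k. Re (expect d N W (b k)) - E * nb k)"
  have alt: "0 < excess k \<or> excess k = 0 \<and> proj (b k) = (\<lambda>x y. of_real (nb k) * proj \<psi> x y)"
    if "k < n" for k
    using expect_gap_scaled[OF gap, of "b k"] b that unfolding E_def nb_def excess_def by auto
  have "(\<Sum>k<n. excess k) = 0"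
    using norm_sum expect_sum by (simp add: excess_def E_def nb_def sum_subtractf flip: sum_distrib_left)
  moreover have "\<forall>k<n. 0 \<le> excess k"
    using alt by fastforce
  ultimately have "\<forall>k<n. excess k = 0"
    by (metis finite_lessThan lessThan_iff sum_nonneg_eq_0_iff)
  then have proj_b: "\<forall>k<n. proj (b k) = (\<lambda>x y. of_real (nb k) * proj \<psi> x y)"
    using alt by fastforce
  show ?thesis
  proof (intro ballI)
    fix x y assume "x \<in> cfgs d {..<N}" "y \<in> cfgs d {..<N}"
    then have "\<sigma> x y = (\<Sum>k<n. proj (b k) x y)"
      using rep by (simp add: proj_def)
    also have "\<dots> = of_real (\<Sum>k<n. nb k) * proj \<psi> x y"
      using proj_b by (simp add: sum_distrib_right)
    finally show "\<sigma> x y = proj \<psi> x y"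
      using norm_sum by (simp add: nb_def)
  qed
qed

theorem mainTheorem3:
  fixes d :: "nat \<Rightarrow> nat" and N :: nat and NS :: "nat set set"
    and \<psi> :: "cfg \<Rightarrow> complex" and W :: qop and Wloc :: "nat set \<Rightarrow> qop"
  assumes dims: "\<forall>a<N. 0 < d a"
    and psi: "unit_vec d N \<psi>"
    and ns: "neighborhood_structure N NS"
    and nt: "nontrivial_ns N NS"
    and Wloc: "\<forall>S\<in>NS. op_on d S (Wloc S)"
    and Wdef: "W = (\<lambda>x y. \<Sum>S\<in>NS. ext_op d N S (Wloc S) x y)"
    and Wherm: "hermitian_op d {..<N} W"
    and gap: "\<forall>\<phi>. unit_vec d N \<phi> \<and> \<phi> \<in> dqls d N NS \<psi> \<and> proj \<phi> \<noteq> proj \<psi>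
                 \<longrightarrow> Re (expect d N W \<psi>) < Re (expect d N W \<phi>)"
  shows "UDA d N NS (proj \<psi>)"
  unfolding UDA_def
proof (intro allI impI, elim conjE)
  fix \<sigma> assume dens: "density_op d N \<sigma>"
    and marg: "\<forall>S\<in>NS. ptrace d N S \<sigma> = ptrace d N S (proj \<psi>)"
  let ?X = "cfgs d {..<N}"
  have nsS: "\<forall>S\<in>NS. S \<subseteq> {..<N}"
    using ns by (auto simp: neighborhood_structure_def)
  note H = density_opD(1)[OF dens] and P = density_opD(2)[OF dens]
  obtain n :: nat and b where rep: "\<forall>x\<in>?X. \<forall>y\<in>?X. \<sigma> x y = (\<Sum>k<n. b k x * cnj (b k y))"
    and b_on: "\<forall>k<n. \<forall>x. x \<notin> ?X \<longrightarrow> b k x = 0"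
    and b_orth: "\<forall>k<n. \<forall>v. (\<forall>x\<in>?X. mat_vec ?X \<sigma> v x = 0) \<longrightarrow> inner_on ?X v (b k) = 0"
    using psd_rank_one_decomp[OF finite_cfgs[OF finite_lessThan] H P]
    unfolding rank_one_decomp_def by blast
  have "\<forall>k<n. vec_on d {..<N} (b k) \<and> b k \<in> dqls d N NS \<psi>"
    using b_on b_orth in_dqls_if_same_marginals[OF nsS H P marg] by (simp add: vec_on_def)
  moreover have "(\<Sum>k<n. sqnorm_on ?X (b k)) = 1"
    using density_opD(3)[OF dens] sum_diag_rank_one_sum[OF rep] by (metis of_real_eq_1_iff)
  moreover have "(\<Sum>k<n. Re (expect d N W (b k))) = Re (expect d N W \<psi>)"
    using expect_rank_one_sum_if_same_marginals[OF nsS marg rep] by (simp add: Wdef expect_eq_tr_mult_proj)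
  ultimately have "\<forall>x\<in>?X. \<forall>y\<in>?X. \<sigma> x y = proj \<psi> x y"
    using rank_one_sum_eq_proj_if_gap[OF gap _ rep] by blast
  moreover have "\<forall>x. x \<notin> ?X \<longrightarrow> \<psi> x = 0"
    using psi by (simp add: unit_vec_def vec_on_def)
  ultimately show "\<sigma> = proj \<psi>"
    using density_opD(4)[OF dens] by (fastforce simp: proj_def)
qed

end
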